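(* Let $x_0,\dots,x_{T-1}\stackrel{\text{i.i.d.}}{\sim}\mathcal{N}(0,I_d)$ and $\phi_t=\operatorname{svec}(x_tx_t^\top)$. There exists a universal constant $c>0$ such that for every $\delta\in(0,1)$, if $T\ge c\,d^4\log\!\big(c\,\tfrac{d^2}{\delta}\big)$, then $$\mathbb{P}\left(\lambda_{\min}\Big(\sum_{t=0}^{T-1}\phi_t\phi_t^\top\Big)>T\right)\ge1-\delta.$$
   Context: $\operatorname{svec}$ maps a symmetric $d\times d$ matrix $M$ to the vector in $\mathbb{R}^{d(d+1)/2}$ listing its diagonal entries $M_{ii}$ and its entries $\sqrt{2}\,M_{ij}$ for $i<j$ (in a fixed order), so that $\|\operatorname{svec}(M)\|_2=\|M\|_F$. *)

theory Defs
  imports "HOL-Probability.Probability"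
begin

text \<open>Index set of svec coordinates: pairs (i,j) with i \<le> j < d.
  Since lambda_min does not depend on the chosen ordering of coordinates, we index vectors and
  matrices directly by this finite set.\<close>
definition svec_idx :: "nat \<Rightarrow> (nat \<times> nat) set" where
  "svec_idx d = {(i, j). i \<le> j \<and> j < d}"

definition svec :: "(nat \<Rightarrow> nat \<Rightarrow> real) \<Rightarrow> nat \<times> nat \<Rightarrow> real" where
  "svec M = (\<lambda>(i, j). if i = j then M i i else sqrt 2 * M i j)"

definition real_eigenvalues :: "'a set \<Rightarrow> ('a \<Rightarrow> 'a \<Rightarrow> real) \<Rightarrow> real set" where
  "real_eigenvalues I A = {l. \<exists>v. (\<exists>k\<in>I. v k \<noteq> 0) \<and> (\<forall>k\<in>I. (\<Sum>m\<in>I. A k m * v m) = l * v k)}"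

definition lambda_min :: "'a set \<Rightarrow> ('a \<Rightarrow> 'a \<Rightarrow> real) \<Rightarrow> real" where
  "lambda_min I A = Min (real_eigenvalues I A)"

text \<open>Sample space of T i.i.d. N(0, I_d) vectors: omega (t, i) is coordinate i of x_t.\<close>
definition gauss_samples :: "nat \<Rightarrow> nat \<Rightarrow> (nat \<times> nat \<Rightarrow> real) measure" where
  "gauss_samples T d = PiM ({..<T} \<times> {..<d}) (\<lambda>_. std_normal_distribution)"

definition feature :: "(nat \<times> nat \<Rightarrow> real) \<Rightarrow> nat \<Rightarrow> nat \<times> nat \<Rightarrow> real" where
  "feature \<omega> t = svec (\<lambda>i j. \<omega> (t, i) * \<omega> (t, j))"

end

(*
  Cut the T samples into k = T div m blocks of m = 13440 d^4 consecutive time steps. By Isserlis'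
  theorem E[phi phi^T] = Sigma with Sigma >= 2 I, and phi has bounded fourth moments, so the squared
  Frobenius distance between the empirical second moment matrix of a block and m Sigma has mean at
  most 420 m d^4. By Markov's inequality a block is bad (distance at least m^2/4) with probability
  at most 1/8, while on a good block the empirical matrix is at least (3/2) m I. The blocks are
  independent, so by Hoeffding's inequality, with probability at least 1 - exp(-k/32), at most a
  quarter of them are bad, and then lambda_min >= (9/8) k m > T.
*)
theory Submission
  imports Defs "Jordan_Normal_Form.Char_Poly"
begin

definition symmetric_on :: "'a set \<Rightarrow> ('a \<Rightarrow> 'a \<Rightarrow> real) \<Rightarrow> bool" where
  "symmetric_on I M \<longleftrightarrow> (\<forall>p\<in>I. \<forall>q\<in>I. M p q = M q p)"

definition quad_form :: "'a set \<Rightarrow> ('a \<Rightarrow> 'a \<Rightarrow> real) \<Rightarrow> ('a \<Rightarrow> real) \<Rightarrow> real" where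
  "quad_form I M v = (\<Sum>p\<in>I. \<Sum>q\<in>I. v p * M p q * v q)"

definition sq_norm :: "'a set \<Rightarrow> ('a \<Rightarrow> real) \<Rightarrow> real" where
  "sq_norm I v = (\<Sum>p\<in>I. (v p)\<^sup>2)"

lemma sq_norm_nonneg: "0 \<le> sq_norm I v"
  unfolding sq_norm_def by (simp add: sum_nonneg)

lemma sq_norm_eq_0_iff: "finite I \<Longrightarrow> sq_norm I v = 0 \<longleftrightarrow> (\<forall>p\<in>I. v p = 0)"
  unfolding sq_norm_def by (simp add: sum_nonneg_eq_0_iff)

lemma quad_form_cong: "(\<And>p. p \<in> I \<Longrightarrow> v p = w p) \<Longrightarrow> quad_form I M v = quad_form I M w"
  unfolding quad_form_def by (intro sum.cong) auto

lemma sq_norm_cong: "(\<And>p. p \<in> I \<Longrightarrow> v p = w p) \<Longrightarrow> sq_norm I v = sq_norm I w"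
  unfolding sq_norm_def by (intro sum.cong) auto

lemma quad_form_scale: "quad_form I M (\<lambda>p. c * v p) = c\<^sup>2 * quad_form I M v"
  unfolding quad_form_def by (simp add: sum_distrib_left power2_eq_square mult_ac)

lemma sq_norm_scale: "sq_norm I (\<lambda>p. c * v p) = c\<^sup>2 * sq_norm I v"
  unfolding sq_norm_def by (simp add: sum_distrib_left power2_eq_square mult_ac)

lemma quad_form_add_scaled:
  assumes "symmetric_on I M"
  shows "quad_form I M (\<lambda>p. u p + t * w p) =
    quad_form I M u + 2 * t * (\<Sum>p\<in>I. w p * (\<Sum>q\<in>I. M p q * u q)) + t\<^sup>2 * quad_form I M w"
proof -
  have swap: "(\<Sum>p\<in>I. \<Sum>q\<in>I. u p * M p q * w q) = (\<Sum>p\<in>I. \<Sum>q\<in>I. w p * M p q * u q)"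
    using assms by (subst sum.swap) (auto simp: symmetric_on_def mult_ac intro!: sum.cong)
  have "quad_form I M (\<lambda>p. u p + t * w p) = quad_form I M u
      + t * (\<Sum>p\<in>I. \<Sum>q\<in>I. w p * M p q * u q) + t * (\<Sum>p\<in>I. \<Sum>q\<in>I. u p * M p q * w q)
      + t\<^sup>2 * quad_form I M w"
    unfolding quad_form_def
    by (simp add: sum.distrib sum_distrib_left algebra_simps power2_eq_square)
  then show ?thesis
    unfolding swap by (simp add: sum_distrib_left mult_ac)
qed

lemma sq_norm_add_scaled:
  "sq_norm I (\<lambda>p. u p + t * w p) = sq_norm I u + 2 * t * (\<Sum>p\<in>I. w p * u p) + t\<^sup>2 * sq_norm I w"
  unfolding sq_norm_def by (simp add: sum.distrib sum_distrib_left power2_eq_square algebra_simps)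

lemma quad_form_sum_outer:
  "quad_form I (\<lambda>p q. \<Sum>t\<in>B. x t p * x t q) v = (\<Sum>t\<in>B. (\<Sum>p\<in>I. v p * x t p)\<^sup>2)"
proof -
  have "quad_form I (\<lambda>p q. \<Sum>t\<in>B. x t p * x t q) v
      = (\<Sum>p\<in>I. \<Sum>q\<in>I. \<Sum>t\<in>B. (v p * x t p) * (v q * x t q))"
    unfolding quad_form_def by (simp add: sum_distrib_left sum_distrib_right mult_ac)
  also have "\<dots> = (\<Sum>p\<in>I. \<Sum>t\<in>B. \<Sum>q\<in>I. (v p * x t p) * (v q * x t q))"
    by (intro sum.cong refl sum.swap)
  also have "\<dots> = (\<Sum>t\<in>B. \<Sum>p\<in>I. \<Sum>q\<in>I. (v p * x t p) * (v q * x t q))"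
    by (rule sum.swap)
  also have "\<dots> = (\<Sum>t\<in>B. (\<Sum>p\<in>I. v p * x t p)\<^sup>2)"
    by (simp add: power2_eq_square sum_product)
  finally show ?thesis .
qed

lemma quad_form_square_le:
  "(quad_form I E v)\<^sup>2 \<le> (sq_norm I v)\<^sup>2 * (\<Sum>p\<in>I. \<Sum>q\<in>I. (E p q)\<^sup>2)"
proof -
  have "(quad_form I E v)\<^sup>2 = (\<Sum>pq\<in>I \<times> I. (v (fst pq) * v (snd pq)) * E (fst pq) (snd pq))\<^sup>2"
    unfolding quad_form_def by (simp add: sum.cartesian_product case_prod_beta mult_ac)
  also have "\<dots> \<le> (\<Sum>pq\<in>I \<times> I. (v (fst pq) * v (snd pq))\<^sup>2) * (\<Sum>pq\<in>I \<times> I. (E (fst pq) (snd pq))\<^sup>2)"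
    by (rule Cauchy_Schwarz_ineq_sum)
  also have "\<dots> = (sq_norm I v)\<^sup>2 * (\<Sum>p\<in>I. \<Sum>q\<in>I. (E p q)\<^sup>2)"
    unfolding sq_norm_def
    by (simp add: sum.cartesian_product case_prod_beta power2_eq_square sum_product mult_ac)
  finally show ?thesis .
qed

lemma quad_form_eigenvector:
  assumes "\<forall>k\<in>I. (\<Sum>m\<in>I. M k m * v m) = l * v k"
  shows "quad_form I M v = l * sq_norm I v"
proof -
  have "quad_form I M v = (\<Sum>p\<in>I. v p * (\<Sum>q\<in>I. M p q * v q))"
    unfolding quad_form_def by (simp add: sum_distrib_left mult.assoc)
  also have "\<dots> = (\<Sum>p\<in>I. l * (v p)\<^sup>2)"
    using assms by (intro sum.cong) (auto simp: power2_eq_square)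
  finally show ?thesis by (simp add: sq_norm_def sum_distrib_left)
qed

text \<open>Every real eigenvalue is a root of the characteristic polynomial of the matrix obtained
  by enumerating I.\<close>
lemma finite_real_eigenvalues:
  assumes "finite I"
  shows "finite (real_eigenvalues I M)"
proof -
  obtain e where e: "bij_betw e {..<card I} I"
    using assms by (metis atLeast0LessThan ex_bij_betw_nat_finite)
  define n where "n = card I"
  define A where "A = mat n n (\<lambda>(i, j). M (e i) (e j))"
  have A: "A \<in> carrier_mat n n" unfolding A_def by simp
  have "real_eigenvalues I M \<subseteq> {x. poly (char_poly A) x = 0}"
  proof
    fix l assume "l \<in> real_eigenvalues I M"
    then obtain v k where k: "k \<in> I" "v k \<noteq> 0"
      and eig: "\<forall>k\<in>I. (\<Sum>m\<in>I. M k m * v m) = l * v k"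
      unfolding real_eigenvalues_def by blast
    define w where "w = vec n (\<lambda>i. v (e i))"
    obtain i where i: "i < n" "e i = k"
      using e k unfolding n_def bij_betw_def by (metis imageE lessThan_iff)
    have "w \<noteq> 0\<^sub>v n"
      using i k by (auto simp: w_def vec_eq_iff)
    moreover have "A *\<^sub>v w = l \<cdot>\<^sub>v w"
    proof (rule eq_vecI)
      fix i assume "i < dim_vec (l \<cdot>\<^sub>v w)"
      then have i: "i < n" by (simp add: w_def)
      have "(A *\<^sub>v w) $ i = (\<Sum>j<n. M (e i) (e j) * v (e j))"
        using i by (simp add: A_def w_def mult_mat_vec_def scalar_prod_def lessThan_atLeast0)
      also have "\<dots> = (\<Sum>m\<in>I. M (e i) m * v m)"
        using sum.reindex_bij_betw[OF e, of "\<lambda>m. M (e i) m * v m"] by (simp add: n_def)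
      also have "\<dots> = l * v (e i)"
        using eig e i unfolding bij_betw_def n_def by auto
      finally show "(A *\<^sub>v w) $ i = (l \<cdot>\<^sub>v w) $ i" using i by (simp add: w_def)
    qed (simp add: A_def w_def)
    ultimately have "eigenvalue A l"
      unfolding eigenvalue_def eigenvector_def using A by (intro exI[of _ w]) (simp add: w_def)
    then show "l \<in> {x. poly (char_poly A) x = 0}"
      using eigenvalue_root_char_poly[OF A] by simp
  qed
  moreover have "char_poly A \<noteq> 0"
    using degree_monic_char_poly[OF A] by auto
  ultimately show ?thesis
    using poly_roots_finite finite_subset by blast
qed

lemma compact_unit_box: "compact (PiE UNIV (\<lambda>p. if p \<in> I then {-1..1::real} else {0}))"
proof -
  have "compactin (product_topology (\<lambda>_. euclidean) UNIV)
          (PiE UNIV (\<lambda>p. if p \<in> I then {-1..1::real} else {0}))"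
    by (subst compactin_PiE) auto
  then show ?thesis by (simp add: euclidean_product_topology)
qed

lemma continuous_on_sq_norm: "continuous_on S (\<lambda>v. sq_norm I v)"
  unfolding sq_norm_def
  by (intro continuous_intros continuous_on_product_then_coordinatewise continuous_on_id)

lemma continuous_on_quad_form: "continuous_on S (\<lambda>v. quad_form I M v)"
  unfolding quad_form_def
  by (intro continuous_intros continuous_on_product_then_coordinatewise continuous_on_id)

lemma quad_form_ge_of_unit_bound:
  assumes fin: "finite I"
    and unit: "\<And>w. sq_norm I w = 1 \<Longrightarrow> (\<And>p. p \<notin> I \<Longrightarrow> w p = 0) \<Longrightarrow> c \<le> quad_form I M w"
  shows "c * sq_norm I v \<le> quad_form I M v"
proof (cases "sq_norm I v = 0")
  case True
  then have "\<forall>p\<in>I. v p = 0" using sq_norm_eq_0_iff[OF fin] by blast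
  then have "quad_form I M v = 0" by (simp add: quad_form_def)
  then show ?thesis using True by simp
next
  case False
  then have pos: "sq_norm I v > 0" using sq_norm_nonneg[of I v] by linarith
  define s where "s = 1 / sqrt (sq_norm I v)"
  define w where "w p = (if p \<in> I then s * v p else 0)" for p
  have s2: "s\<^sup>2 * sq_norm I v = 1"
    unfolding s_def using pos by (simp add: power_divide)
  have "sq_norm I w = 1"
    using s2 sq_norm_scale[of I s v] sq_norm_cong[of I w "\<lambda>p. s * v p"] by (simp add: w_def)
  then have "c \<le> quad_form I M w"
    by (rule unit) (simp add: w_def)
  also have "quad_form I M w = s\<^sup>2 * quad_form I M v"
    using quad_form_scale[of I M s v] quad_form_cong[of I w "\<lambda>p. s * v p"] by (simp add: w_def)
  finally have "c * sq_norm I v \<le> s\<^sup>2 * quad_form I M v * sq_norm I v"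
    using pos by (intro mult_right_mono) auto
  also have "\<dots> = quad_form I M v" using s2 by (simp add: mult_ac)
  finally show ?thesis .
qed

text \<open>Minimise the quadratic form over the unit sphere, which is compact inside the unit box
  of the product topology.\<close>
lemma exists_rayleigh_minimizer:
  assumes fin: "finite I" and ne: "I \<noteq> {}"
  obtains u where "sq_norm I u = 1" "\<And>v. quad_form I M u * sq_norm I v \<le> quad_form I M v"
proof -
  define S where
    "S = PiE UNIV (\<lambda>p. if p \<in> I then {-1..1::real} else {0}) \<inter> {v. sq_norm I v = 1}"
  have cS: "compact S"
    unfolding S_def
    using continuous_closed_preimage_constant[OF continuous_on_sq_norm closed_UNIV, of I 1]
    by (intro compact_Int_closed compact_unit_box) simp
  have unit_in_S: "w \<in> S" if w: "sq_norm I w = 1" "\<And>p. p \<notin> I \<Longrightarrow> w p = 0" for w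
  proof -
    have "w p \<in> {-1..1}" if "p \<in> I" for p
    proof -
      have "(w p)\<^sup>2 \<le> sq_norm I w"
        unfolding sq_norm_def using fin that by (intro member_le_sum) auto
      then have "\<bar>w p\<bar> \<le> 1" using w(1) by (metis abs_le_square_iff abs_one power_one)
      then show ?thesis by auto
    qed
    then show ?thesis
      using w by (auto simp: S_def PiE_iff)
  qed
  obtain p0 where p0: "p0 \<in> I" using ne by blast
  have "sq_norm I (\<lambda>p. of_bool (p = p0)) = (\<Sum>p\<in>I. if p = p0 then 1 else 0)"
    unfolding sq_norm_def by (intro sum.cong) auto
  then have "sq_norm I (\<lambda>p. of_bool (p = p0)) = 1"
    using fin p0 by simp
  then have neS: "S \<noteq> {}"
    using unit_in_S[of "\<lambda>p. of_bool (p = p0)"] p0 by auto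
  obtain u where u: "u \<in> S" and min: "\<And>w. w \<in> S \<Longrightarrow> quad_form I M u \<le> quad_form I M w"
    using continuous_attains_inf[OF cS neS continuous_on_quad_form] by blast
  have "quad_form I M u * sq_norm I v \<le> quad_form I M v" for v
    using fin by (rule quad_form_ge_of_unit_bound) (intro min unit_in_S)
  moreover have "sq_norm I u = 1" using u by (simp add: S_def)
  ultimately show ?thesis using that by blast
qed

text \<open>The form v \<mapsto> v^T M v - \<mu> |v|^2 is nonnegative and vanishes at u, so its derivative
  2 |g|^2 at u in the direction g = M u - \<mu> u must vanish.\<close>
lemma rayleigh_minimizer_eigenvector:
  assumes fin: "finite I" and sym: "symmetric_on I M"
    and lower: "\<And>v. \<mu> * sq_norm I v \<le> quad_form I M v"
    and attained: "quad_form I M u = \<mu> * sq_norm I u"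
  shows "\<forall>k\<in>I. (\<Sum>m\<in>I. M k m * u m) = \<mu> * u k"
proof -
  define g where "g p = (\<Sum>q\<in>I. M p q * u q) - \<mu> * u p" for p
  define N where "N = sq_norm I g"
  define C where "C = quad_form I M g - \<mu> * N"
  have N_eq: "(\<Sum>p\<in>I. g p * (\<Sum>q\<in>I. M p q * u q)) - \<mu> * (\<Sum>p\<in>I. g p * u p) = N"
    unfolding N_def sq_norm_def g_def
    by (simp add: sum_distrib_left sum_subtractf[symmetric] power2_eq_square algebra_simps)
  have quadratic: "0 \<le> 2 * t * N + t\<^sup>2 * C" for t
    using lower[of "\<lambda>p. u p + t * g p"] attained N_eq
    unfolding quad_form_add_scaled[OF sym] sq_norm_add_scaled C_def N_def
    by (simp add: algebra_simps)
  have "N \<le> 0"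
  proof (rule ccontr)
    assume "\<not> N \<le> 0"
    define s where "s = N / (\<bar>C\<bar> + 1)"
    have s: "0 < s" "s * \<bar>C\<bar> < N"
      using \<open>\<not> N \<le> 0\<close> by (auto simp: s_def field_simps)
    have "2 * s * N \<le> s\<^sup>2 * C"
      using quadratic[of "- s"] by simp
    then have "2 * N \<le> s * \<bar>C\<bar>"
      using s by (simp add: power2_eq_square) (smt (verit) abs_ge_self mult_left_mono)
    then show False using s \<open>\<not> N \<le> 0\<close> by linarith
  qed
  then have "N = 0" using sq_norm_nonneg[of I g] by (simp add: N_def)
  then show ?thesis
    using fin by (simp add: N_def sq_norm_eq_0_iff g_def)
qed

lemma lambda_min_ge_iff:
  assumes fin: "finite I" and ne: "I \<noteq> {}" and sym: "symmetric_on I M"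
  shows "c \<le> lambda_min I M \<longleftrightarrow> (\<forall>v. c * sq_norm I v \<le> quad_form I M v)"
proof -
  obtain u where u: "sq_norm I u = 1" and min: "\<And>v. quad_form I M u * sq_norm I v \<le> quad_form I M v"
    using exists_rayleigh_minimizer[OF fin ne] by blast
  define \<mu> where "\<mu> = quad_form I M u"
  have "\<exists>k\<in>I. u k \<noteq> 0"
    using u sq_norm_eq_0_iff[OF fin, of u] by auto
  then have \<mu>: "\<mu> \<in> real_eigenvalues I M"
    using rayleigh_minimizer_eigenvector[OF fin sym min, of u] u
    unfolding real_eigenvalues_def \<mu>_def by auto
  then have ne_eig: "real_eigenvalues I M \<noteq> {}" by blast
  have "lambda_min I M \<in> real_eigenvalues I M"
    unfolding lambda_min_def using Min_in[OF finite_real_eigenvalues[OF fin] ne_eig] .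
  then obtain w k where k: "k \<in> I" "w k \<noteq> 0"
    and w: "\<forall>k\<in>I. (\<Sum>m\<in>I. M k m * w m) = lambda_min I M * w k"
    unfolding real_eigenvalues_def by blast
  have w_pos: "0 < sq_norm I w"
    using k sq_norm_eq_0_iff[OF fin, of w] sq_norm_nonneg[of I w] by fastforce
  have le_\<mu>: "lambda_min I M \<le> \<mu>"
    unfolding lambda_min_def using Min_le[OF finite_real_eigenvalues[OF fin] \<mu>] .
  show ?thesis
  proof
    assume "c \<le> lambda_min I M"
    then have "c \<le> \<mu>" using le_\<mu> by linarith
    have "c * sq_norm I v \<le> quad_form I M v" for v
    proof -
      have "c * sq_norm I v \<le> \<mu> * sq_norm I v"
        using \<open>c \<le> \<mu>\<close> sq_norm_nonneg by (rule mult_right_mono)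
      then show ?thesis using min[of v] unfolding \<mu>_def by linarith
    qed
    then show "\<forall>v. c * sq_norm I v \<le> quad_form I M v" by blast
  next
    assume "\<forall>v. c * sq_norm I v \<le> quad_form I M v"
    then have "c * sq_norm I w \<le> lambda_min I M * sq_norm I w"
      unfolding quad_form_eigenvector[OF w, symmetric] by blast
    then show "c \<le> lambda_min I M"
      using w_pos by simp
  qed
qed

lemma quad_form_bound_from_rational:
  assumes fin: "finite I"
    and rat: "\<And>v. v \<in> PiE I (\<lambda>_. \<rat>) \<Longrightarrow> c * sq_norm I v \<le> quad_form I M v"
  shows "c * sq_norm I v \<le> quad_form I M v"
proof -
  have "\<exists>r. (\<forall>n. r n \<in> \<rat>) \<and> r \<longlonglongrightarrow> v p" for p
  proof -
    have "v p \<in> closure \<rat>" by (simp add: Rats_closure_real)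
    then show ?thesis unfolding closure_sequential .
  qed
  then obtain r where r: "\<And>p n. r p n \<in> \<rat>" "\<And>p. r p \<longlonglongrightarrow> v p"
    by metis
  define w where "w n = restrict (\<lambda>p. r p n) I" for n
  have w: "(\<lambda>n. w n p) \<longlonglongrightarrow> v p" if "p \<in> I" for p
    using r(2)[of p] that by (simp add: w_def)
  have "(\<lambda>n. quad_form I M (w n) - c * sq_norm I (w n)) \<longlonglongrightarrow> quad_form I M v - c * sq_norm I v"
    unfolding quad_form_def sq_norm_def by (intro tendsto_intros w)
  moreover have "0 \<le> quad_form I M (w n) - c * sq_norm I (w n)" for n
    using rat[of "w n"] r(1) by (simp add: w_def)
  ultimately have "0 \<le> quad_form I M v - c * sq_norm I v"
    by (intro LIMSEQ_le_const[of "\<lambda>n. quad_form I M (w n) - c * sq_norm I (w n)"]) auto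
  then show ?thesis by simp
qed

lemma borel_measurable_lambda_min:
  assumes fin: "finite I" and ne: "I \<noteq> {}" and sym: "\<And>\<omega>. symmetric_on I (A \<omega>)"
    and meas: "\<And>p q. (\<lambda>\<omega>. A \<omega> p q) \<in> borel_measurable M"
  shows "(\<lambda>\<omega>. lambda_min I (A \<omega>)) \<in> borel_measurable M"
proof -
  let ?R = "PiE I (\<lambda>_. \<rat>)"
  have countable: "countable ?R"
    using fin by (intro countable_PiE countable_rat)
  have gt_iff: "c < lambda_min I (A \<omega>) \<longleftrightarrow>
      (\<exists>n::nat. \<forall>v\<in>?R. (c + 1 / Suc n) * sq_norm I v \<le> quad_form I (A \<omega>) v)" for c \<omega>
  proof
    assume "c < lambda_min I (A \<omega>)"
    then obtain n where "inverse (real (Suc n)) < lambda_min I (A \<omega>) - c"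
      using reals_Archimedean[of "lambda_min I (A \<omega>) - c"] by auto
    then have "c + 1 / Suc n \<le> lambda_min I (A \<omega>)"
      by (simp add: inverse_eq_divide)
    then show "\<exists>n::nat. \<forall>v\<in>?R. (c + 1 / Suc n) * sq_norm I v \<le> quad_form I (A \<omega>) v"
      using lambda_min_ge_iff[OF fin ne sym] by blast
  next
    assume "\<exists>n::nat. \<forall>v\<in>?R. (c + 1 / Suc n) * sq_norm I v \<le> quad_form I (A \<omega>) v"
    then obtain n :: nat where "\<forall>v. (c + 1 / Suc n) * sq_norm I v \<le> quad_form I (A \<omega>) v"
      using quad_form_bound_from_rational[OF fin] by blast
    then have "c + 1 / Suc n \<le> lambda_min I (A \<omega>)"
      using lambda_min_ge_iff[OF fin ne sym] by blast
    moreover have "0 < 1 / real (Suc n)" by simp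
    ultimately show "c < lambda_min I (A \<omega>)" by linarith
  qed
  have [measurable]: "(\<lambda>\<omega>. quad_form I (A \<omega>) v) \<in> borel_measurable M" for v
    unfolding quad_form_def using meas by measurable
  show ?thesis
    unfolding borel_measurable_iff_greater gt_iff
    by (intro allI sets.sets_Collect_countable_Ex sets.sets_Collect_countable_All' countable) simp
qed

lemma prob_space_std_normal: "prob_space std_normal_distribution"
  using prob_space_normal_density by simp

lemma indep_vars_PiM_components:
  assumes M: "\<And>i. i \<in> I \<Longrightarrow> prob_space (M i)"
  shows "prob_space.indep_vars (PiM I M) M (\<lambda>i \<omega>. \<omega> i) I"
proof -
  interpret prob_space "PiM I M" using M by (rule prob_space_PiM)
  show ?thesis
  proof (cases "I = {}")
    case True
    show ?thesis unfolding indep_vars_def indep_sets_def using True by simp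
  next
    case False
    have "distr (PiM I M) (PiM I M) (\<lambda>\<omega>. restrict \<omega> I) = distr (PiM I M) (PiM I M) (\<lambda>\<omega>. \<omega>)"
      by (intro distr_cong) (auto simp: space_PiM PiE_restrict)
    moreover have "PiM I (\<lambda>i. distr (PiM I M) (M i) (\<lambda>\<omega>. \<omega> i)) = PiM I M"
      using M by (intro PiM_cong) (auto simp: distr_PiM_component)
    ultimately show ?thesis
      using False by (subst indep_vars_iff_distr_eq_PiM') auto
  qed
qed

lemma indep_vars_PiM_disjoint_supports:
  assumes M: "\<And>i. i \<in> I \<Longrightarrow> prob_space (M i)"
    and K: "\<And>j. j \<in> J \<Longrightarrow> K j \<subseteq> I" "disjoint_family_on K J"
    and meas: "\<And>j. j \<in> J \<Longrightarrow> X j \<in> borel_measurable (PiM (K j) M)"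
    and local: "\<And>j \<omega>. j \<in> J \<Longrightarrow> X j (restrict \<omega> (K j)) = X j \<omega>"
  shows "prob_space.indep_vars (PiM I M) (\<lambda>_. borel) X J"
proof -
  interpret prob_space "PiM I M" using M by (rule prob_space_PiM)
  have "indep_vars (\<lambda>j. PiM (K j) M) (\<lambda>j \<omega>. restrict (\<lambda>i. \<omega> i) (K j)) J"
    by (rule indep_vars_restrict[OF indep_vars_PiM_components[OF M] K])
  then have "indep_vars (\<lambda>_. borel) (\<lambda>j \<omega>. X j (restrict \<omega> (K j))) J"
    using meas by (rule indep_vars_compose2)
  then show ?thesis
    by (rule indep_vars_cong[THEN iffD1, rotated -1]) (auto simp: local)
qed

definition std_normal_moment :: "nat \<Rightarrow> real" where
  "std_normal_moment n = (\<integral>x. x ^ n \<partial>std_normal_distribution)"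

lemma std_normal_moment_simps:
  "std_normal_moment 1 = 0" "std_normal_moment 2 = 1" "std_normal_moment 3 = 0"
  "std_normal_moment 4 = 3" "std_normal_moment 8 = 105"
  unfolding std_normal_moment_def
  using integral_std_normal_distribution_moment_odd[of 1]
    integral_std_normal_distribution_moment_odd[of 3]
    std_normal_distribution_even_moments(1)[of 1] std_normal_distribution_even_moments(1)[of 2]
    std_normal_distribution_even_moments(1)[of 4]
  by (simp_all add: fact_numeral)

lemma PiM_std_normal_component_moment:
  assumes "a \<in> I"
  shows "integrable (PiM I (\<lambda>_. std_normal_distribution)) (\<lambda>\<omega>. \<omega> a ^ n)"
    and "(\<integral>\<omega>. \<omega> a ^ n \<partial>PiM I (\<lambda>_. std_normal_distribution)) = std_normal_moment n"
proof -
  let ?N = "PiM I (\<lambda>_. std_normal_distribution)"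
  have meas: "(\<lambda>\<omega>. \<omega> a) \<in> measurable ?N std_normal_distribution"
    using assms by measurable
  have distr: "distr ?N std_normal_distribution (\<lambda>\<omega>. \<omega> a) = std_normal_distribution"
    using assms by (intro distr_PiM_component prob_space_std_normal)
  show "integrable ?N (\<lambda>\<omega>. \<omega> a ^ n)"
    using integrable_distr_eq[OF meas, of "\<lambda>x. x ^ n"]
    by (simp add: distr integrable_std_normal_distribution_moment)
  show "(\<integral>\<omega>. \<omega> a ^ n \<partial>?N) = std_normal_moment n"
    using integral_distr[OF meas, of "\<lambda>x. x ^ n"] by (simp add: distr std_normal_moment_def)
qed

lemma PiM_std_normal_monomial:
  assumes S: "finite S" "S \<subseteq> I"
  shows "integrable (PiM I (\<lambda>_. std_normal_distribution)) (\<lambda>\<omega>. \<Prod>s\<in>S. \<omega> s ^ n s)"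
    and "(\<integral>\<omega>. (\<Prod>s\<in>S. \<omega> s ^ n s) \<partial>PiM I (\<lambda>_. std_normal_distribution)) =
      (\<Prod>s\<in>S. std_normal_moment (n s))"
proof -
  let ?N = "PiM I (\<lambda>_. std_normal_distribution)"
  interpret prob_space ?N by (intro prob_space_PiM prob_space_std_normal)
  have "indep_vars (\<lambda>_. std_normal_distribution) (\<lambda>i \<omega>. \<omega> i) I"
    by (rule indep_vars_PiM_components[OF prob_space_std_normal])
  then have "indep_vars (\<lambda>_. std_normal_distribution) (\<lambda>i \<omega>. \<omega> i) S"
    using S(2) by (rule indep_vars_subset)
  then have ind: "indep_vars (\<lambda>_. borel) (\<lambda>s \<omega>. \<omega> s ^ n s) S"
    by (rule indep_vars_compose2[where Y="\<lambda>s x. x ^ n s"]) simp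
  have int: "integrable ?N (\<lambda>\<omega>. \<omega> s ^ n s)" if "s \<in> S" for s
    using that S(2) by (intro PiM_std_normal_component_moment(1)) blast
  show "integrable ?N (\<lambda>\<omega>. \<Prod>s\<in>S. \<omega> s ^ n s)"
    by (rule indep_vars_integrable[OF S(1) ind int])
  have "(\<integral>\<omega>. (\<Prod>s\<in>S. \<omega> s ^ n s) \<partial>?N) = (\<Prod>s\<in>S. \<integral>\<omega>. \<omega> s ^ n s \<partial>?N)"
    by (rule indep_vars_lebesgue_integral[OF S(1) ind int])
  also have "\<dots> = (\<Prod>s\<in>S. std_normal_moment (n s))"
    using S(2) by (intro prod.cong refl PiM_std_normal_component_moment(2)) blast
  finally show "(\<integral>\<omega>. (\<Prod>s\<in>S. \<omega> s ^ n s) \<partial>?N) = (\<Prod>s\<in>S. std_normal_moment (n s))" .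
qed

lemma std_normal_moment_prod_mset4:
  "(\<Prod>s\<in>set_mset {#a, b, c, e#}. std_normal_moment (count {#a, b, c, e#} s)) =
     of_bool (a = b \<and> c = e) + of_bool (a = c \<and> b = e) + of_bool (a = e \<and> b = c)"
  by (cases "a = b"; cases "a = c"; cases "a = e"; cases "b = c"; cases "b = e"; cases "c = e")
     (simp_all add: std_normal_moment_simps[unfolded eval_nat_numeral BitM.simps One_nat_def]
        insert_commute)

lemma PiM_std_normal_isserlis4:
  assumes "{a, b, c, e} \<subseteq> I"
  shows "integrable (PiM I (\<lambda>_. std_normal_distribution)) (\<lambda>\<omega>. \<omega> a * \<omega> b * \<omega> c * \<omega> e)"
    and "(\<integral>\<omega>. \<omega> a * \<omega> b * \<omega> c * \<omega> e \<partial>PiM I (\<lambda>_. std_normal_distribution)) =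
      of_bool (a = b \<and> c = e) + of_bool (a = c \<and> b = e) + of_bool (a = e \<and> b = c)"
proof -
  let ?X = "{#a, b, c, e#}"
  have prod: "\<omega> a * \<omega> b * \<omega> c * \<omega> e = (\<Prod>s\<in>set_mset ?X. \<omega> s ^ count ?X s)"
    for \<omega> :: "_ \<Rightarrow> real"
    using image_prod_mset_multiplicity[of \<omega> ?X] by (simp add: mult_ac)
  have S: "finite (set_mset ?X)" "set_mset ?X \<subseteq> I"
    using assms by auto
  show "integrable (PiM I (\<lambda>_. std_normal_distribution)) (\<lambda>\<omega>. \<omega> a * \<omega> b * \<omega> c * \<omega> e)"
    unfolding prod by (rule PiM_std_normal_monomial(1)[OF S])
  show "(\<integral>\<omega>. \<omega> a * \<omega> b * \<omega> c * \<omega> e \<partial>PiM I (\<lambda>_. std_normal_distribution)) =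
      of_bool (a = b \<and> c = e) + of_bool (a = c \<and> b = e) + of_bool (a = e \<and> b = c)"
    unfolding prod PiM_std_normal_monomial(2)[OF S] by (rule std_normal_moment_prod_mset4)
qed

lemma measurable_component_PiM_std_normal [measurable]:
  "(\<lambda>\<omega>. \<omega> x) \<in> borel_measurable (PiM K (\<lambda>_. std_normal_distribution))"
proof (cases "x \<in> K")
  case True
  have "measurable (PiM K (\<lambda>_. std_normal_distribution)) std_normal_distribution =
      borel_measurable (PiM K (\<lambda>_. std_normal_distribution))"
    by (intro measurable_cong_sets) simp_all
  then show ?thesis
    using measurable_component_singleton[OF True] by blast
next
  case False
  then have "\<omega> x = undefined" if "\<omega> \<in> space (PiM K (\<lambda>_. std_normal_distribution))" for \<omega>
    using that by (auto simp: space_PiM PiE_def extensional_def)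
  then show ?thesis
    by (subst measurable_cong[where g="\<lambda>_. undefined"]) auto
qed

lemma (in prob_space) expectation_square_sum_indep_centred:
  fixes X :: "'i \<Rightarrow> 'a \<Rightarrow> real"
  assumes fin: "finite B" and ind: "indep_vars (\<lambda>_. borel) X B"
    and int: "\<And>t. t \<in> B \<Longrightarrow> integrable M (X t)"
    and int_sq: "\<And>t. t \<in> B \<Longrightarrow> integrable M (\<lambda>\<omega>. (X t \<omega>)\<^sup>2)"
    and centred: "\<And>t. t \<in> B \<Longrightarrow> expectation (X t) = 0"
  shows "integrable M (\<lambda>\<omega>. (\<Sum>t\<in>B. X t \<omega>)\<^sup>2)"
    and "expectation (\<lambda>\<omega>. (\<Sum>t\<in>B. X t \<omega>)\<^sup>2) = (\<Sum>t\<in>B. expectation (\<lambda>\<omega>. (X t \<omega>)\<^sup>2))"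
proof -
  have cross: "integrable M (\<lambda>\<omega>. X s \<omega> * X t \<omega>) \<and>
      expectation (\<lambda>\<omega>. X s \<omega> * X t \<omega>) = (if s = t then expectation (\<lambda>\<omega>. (X t \<omega>)\<^sup>2) else 0)"
    if st: "s \<in> B" "t \<in> B" for s t
  proof (cases "s = t")
    case True
    then show ?thesis using int_sq[OF st(2)] by (simp add: power2_eq_square)
  next
    case False
    have ind2: "indep_vars (\<lambda>_. borel) X {s, t}"
      using st by (intro indep_vars_subset[OF ind]) auto
    have int2: "\<And>i. i \<in> {s, t} \<Longrightarrow> integrable M (X i)"
      using int st by auto
    have "(\<lambda>\<omega>. X s \<omega> * X t \<omega>) = (\<lambda>\<omega>. \<Prod>i\<in>{s, t}. X i \<omega>)"
      using False by simp
    then show ?thesis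
      using indep_vars_integrable[OF _ ind2 int2] indep_vars_lebesgue_integral[OF _ ind2 int2]
        centred st False by simp
  qed
  have sq: "(\<lambda>\<omega>. (\<Sum>t\<in>B. X t \<omega>)\<^sup>2) = (\<lambda>\<omega>. \<Sum>s\<in>B. \<Sum>t\<in>B. X s \<omega> * X t \<omega>)"
    by (simp add: power2_eq_square sum_product)
  show "integrable M (\<lambda>\<omega>. (\<Sum>t\<in>B. X t \<omega>)\<^sup>2)"
    unfolding sq using cross by (intro Bochner_Integration.integrable_sum) blast
  have "expectation (\<lambda>\<omega>. (\<Sum>t\<in>B. X t \<omega>)\<^sup>2) = (\<Sum>s\<in>B. \<Sum>t\<in>B. expectation (\<lambda>\<omega>. X s \<omega> * X t \<omega>))"
    unfolding sq using cross
    by (simp add: Bochner_Integration.integral_sum Bochner_Integration.integrable_sum)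
  also have "\<dots> = (\<Sum>s\<in>B. \<Sum>t\<in>B. if s = t then expectation (\<lambda>\<omega>. (X t \<omega>)\<^sup>2) else 0)"
    using cross by (intro sum.cong refl) blast
  also have "\<dots> = (\<Sum>t\<in>B. expectation (\<lambda>\<omega>. (X t \<omega>)\<^sup>2))"
    using fin by simp
  finally show "expectation (\<lambda>\<omega>. (\<Sum>t\<in>B. X t \<omega>)\<^sup>2) = (\<Sum>t\<in>B. expectation (\<lambda>\<omega>. (X t \<omega>)\<^sup>2))" .
qed

lemma (in prob_space) prob_sum_ge_quarter_le:
  assumes ind: "indep_vars (\<lambda>_. borel) Z {..<k}" and k: "0 < k"
    and range: "\<And>b \<omega>. b < k \<Longrightarrow> Z b \<omega> \<in> {0..1}"
    and mean: "\<And>b. b < k \<Longrightarrow> expectation (Z b) \<le> 1 / 8"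
  shows "prob {\<omega> \<in> space M. real k / 4 \<le> (\<Sum>b<k. Z b \<omega>)} \<le> exp (- real k / 32)"
proof -
  define \<mu> where "\<mu> = (\<Sum>b<k. expectation (Z b))"
  interpret Hoeffding_ineq M "{..<k}" Z "\<lambda>_. 0" "\<lambda>_. 1" \<mu>
    using ind range by unfold_locales (auto simp: \<mu>_def)
  have "\<mu> \<le> real k / 8"
    unfolding \<mu>_def using sum_mono[of "{..<k}" "\<lambda>b. expectation (Z b)" "\<lambda>_. 1 / 8"] mean by simp
  then have "prob {\<omega> \<in> space M. real k / 4 \<le> (\<Sum>b<k. Z b \<omega>)}
      \<le> prob {\<omega> \<in> space M. \<mu> + real k / 8 \<le> (\<Sum>b<k. Z b \<omega>)}"
    by (intro finite_measure_mono) auto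
  also have "\<dots> \<le> exp (- 2 * (real k / 8)\<^sup>2 / (\<Sum>b<k. (1 - 0)\<^sup>2))"
    using k by (intro Hoeffding_ineq_ge) auto
  also have "- 2 * (real k / 8)\<^sup>2 / (\<Sum>b<k. (1 - 0)\<^sup>2) = - real k / 32"
    using k by (simp add: power2_eq_square field_simps)
  finally show ?thesis .
qed

lemma finite_svec_idx: "finite (svec_idx d)"
  by (rule finite_subset[of _ "{..<d} \<times> {..<d}"]) (auto simp: svec_idx_def)

lemma svec_idx_not_empty: "1 \<le> d \<Longrightarrow> svec_idx d \<noteq> {}"
  unfolding svec_idx_def by (auto intro!: exI[of _ 0])

lemma card_svec_idx_le: "card (svec_idx d) \<le> d\<^sup>2"
proof -
  have "card (svec_idx d) \<le> card ({..<d} \<times> {..<d})"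
    by (intro card_mono) (auto simp: svec_idx_def)
  then show ?thesis by (simp add: card_cartesian_product power2_eq_square)
qed

lemma prob_space_gauss_samples: "prob_space (gauss_samples T d)"
  unfolding gauss_samples_def by (intro prob_space_PiM prob_space_std_normal)

definition svec_weight :: "nat \<times> nat \<Rightarrow> real" where
  "svec_weight p = (if fst p = snd p then 1 else sqrt 2)"

lemma feature_eq: "feature \<omega> t p = svec_weight p * \<omega> (t, fst p) * \<omega> (t, snd p)"
  by (cases p) (simp add: feature_def svec_def svec_weight_def)

lemma measurable_feature [measurable]:
  "(\<lambda>\<omega>. feature \<omega> t p) \<in> borel_measurable (PiM K (\<lambda>_. std_normal_distribution))"
  unfolding feature_eq by measurable

lemma feature_restrict:
  assumes "p \<in> svec_idx d" "{t} \<times> {..<d} \<subseteq> K"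
  shows "feature (restrict \<omega> K) t p = feature \<omega> t p"
proof -
  have "fst p < d" "snd p < d"
    using assms(1) by (auto simp: svec_idx_def)
  then have "(t, fst p) \<in> K" "(t, snd p) \<in> K"
    using assms(2) by auto
  then show ?thesis by (simp add: feature_eq)
qed

text \<open>The second moment matrix of svec(x x^T) for x \<sim> N(0, I), by Isserlis' theorem.\<close>
definition feature_second_moment :: "nat \<times> nat \<Rightarrow> nat \<times> nat \<Rightarrow> real" where
  "feature_second_moment p q = of_bool (fst p = snd p \<and> fst q = snd q) + 2 * of_bool (p = q)"

lemma feature_product_moment:
  assumes t: "t < T" and p: "p \<in> svec_idx d" and q: "q \<in> svec_idx d"
  shows "integrable (gauss_samples T d) (\<lambda>\<omega>. feature \<omega> t p * feature \<omega> t q)"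
    and "(\<integral>\<omega>. feature \<omega> t p * feature \<omega> t q \<partial>gauss_samples T d) = feature_second_moment p q"
proof -
  obtain i j k l where ij: "p = (i, j)" "i \<le> j" "j < d" and kl: "q = (k, l)" "k \<le> l" "l < d"
    using p q by (cases p, cases q) (auto simp: svec_idx_def)
  have prod: "feature \<omega> t p * feature \<omega> t q =
      svec_weight p * svec_weight q * (\<omega> (t, i) * \<omega> (t, j) * \<omega> (t, k) * \<omega> (t, l))" for \<omega>
    by (simp add: feature_eq ij kl mult_ac)
  have sub: "{(t, i), (t, j), (t, k), (t, l)} \<subseteq> {..<T} \<times> {..<d}"
    using t ij kl by auto
  note isserlis = PiM_std_normal_isserlis4[OF sub, folded gauss_samples_def]
  show "integrable (gauss_samples T d) (\<lambda>\<omega>. feature \<omega> t p * feature \<omega> t q)"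
    unfolding prod using isserlis(1) by simp
  have "svec_weight p * svec_weight q * (of_bool (i = j \<and> k = l) + of_bool (i = k \<and> j = l)
      + of_bool (i = l \<and> j = k)) = feature_second_moment p q"
    using ij kl by (auto simp: svec_weight_def feature_second_moment_def)
  then show "(\<integral>\<omega>. feature \<omega> t p * feature \<omega> t q \<partial>gauss_samples T d) = feature_second_moment p q"
    unfolding prod using isserlis(2) by simp
qed

lemma quad_form_feature_second_moment_ge:
  assumes "finite I"
  shows "2 * sq_norm I v \<le> quad_form I feature_second_moment v"
proof -
  let ?diag = "\<lambda>p. of_bool (fst p = snd p) * v p"
  have "quad_form I feature_second_moment v
      = (\<Sum>p\<in>I. \<Sum>q\<in>I. ?diag p * ?diag q) + (\<Sum>p\<in>I. \<Sum>q\<in>I. of_bool (p = q) * (2 * v p * v q))"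
    unfolding quad_form_def feature_second_moment_def
    by (simp add: sum.distrib[symmetric] algebra_simps of_bool_conj)
  also have "(\<Sum>p\<in>I. \<Sum>q\<in>I. ?diag p * ?diag q) = (\<Sum>p\<in>I. ?diag p)\<^sup>2"
    by (simp only: power2_eq_square sum_product)
  also have "(\<Sum>p\<in>I. \<Sum>q\<in>I. of_bool (p = q) * (2 * v p * v q)) = 2 * sq_norm I v"
  proof -
    have "of_bool (p = q) * (2 * v p * v q) = (if q = p then 2 * (v p)\<^sup>2 else 0)" for p q
      by (simp add: power2_eq_square)
    then show ?thesis
      using assms by (simp add: sq_norm_def sum_distrib_left)
  qed
  finally show ?thesis by simp
qed

lemma four_mul_le_sum_power4: "4 * (a * b * c * e) \<le> a ^ 4 + b ^ 4 + c ^ 4 + (e::real) ^ 4"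
proof -
  have "a ^ 4 + b ^ 4 + c ^ 4 + e ^ 4 - 4 * (a * b * c * e) =
      (a\<^sup>2 - b\<^sup>2)\<^sup>2 + (c\<^sup>2 - e\<^sup>2)\<^sup>2 + 2 * (a * b - c * e)\<^sup>2"
    by (simp add: power2_eq_square power4_eq_xxxx algebra_simps)
  then show ?thesis by (smt (verit) zero_le_power2)
qed

lemma feature_product_sq_le:
  "(feature \<omega> t p * feature \<omega> t q)\<^sup>2 \<le>
     \<omega> (t, fst p) ^ 8 + \<omega> (t, snd p) ^ 8 + \<omega> (t, fst q) ^ 8 + \<omega> (t, snd q) ^ 8"
proof -
  let ?a = "(\<omega> (t, fst p))\<^sup>2" and ?b = "(\<omega> (t, snd p))\<^sup>2"
    and ?c = "(\<omega> (t, fst q))\<^sup>2" and ?e = "(\<omega> (t, snd q))\<^sup>2"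
  have "(feature \<omega> t p * feature \<omega> t q)\<^sup>2 = (svec_weight p * svec_weight q)\<^sup>2 * (?a * ?b * ?c * ?e)"
    by (simp add: feature_eq power_mult_distrib mult_ac)
  also have "\<dots> \<le> 4 * (?a * ?b * ?c * ?e)"
    by (intro mult_right_mono) (simp_all add: svec_weight_def power_mult_distrib)
  also have "\<dots> \<le> ?a ^ 4 + ?b ^ 4 + ?c ^ 4 + ?e ^ 4"
    by (rule four_mul_le_sum_power4)
  finally show ?thesis by (simp add: power_mult[symmetric])
qed

lemma feature_product_sq_moment:
  assumes t: "t < T" and p: "p \<in> svec_idx d" and q: "q \<in> svec_idx d"
  shows "integrable (gauss_samples T d) (\<lambda>\<omega>. (feature \<omega> t p * feature \<omega> t q)\<^sup>2)"
    and "(\<integral>\<omega>. (feature \<omega> t p * feature \<omega> t q)\<^sup>2 \<partial>gauss_samples T d) \<le> 420"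
proof -
  let ?G = "gauss_samples T d"
  let ?f = "\<lambda>\<omega>. \<omega> (t, fst p) ^ 8 + \<omega> (t, snd p) ^ 8 + \<omega> (t, fst q) ^ 8 + \<omega> (t, snd q) ^ 8"
  have coords: "(t, fst p) \<in> {..<T} \<times> {..<d}" "(t, snd p) \<in> {..<T} \<times> {..<d}"
      "(t, fst q) \<in> {..<T} \<times> {..<d}" "(t, snd q) \<in> {..<T} \<times> {..<d}"
    using t p q by (auto simp: svec_idx_def)
  have f_int: "integrable ?G ?f"
    using coords unfolding gauss_samples_def
    by (intro Bochner_Integration.integrable_add PiM_std_normal_component_moment(1))
  have f_val: "(\<integral>\<omega>. ?f \<omega> \<partial>?G) = 420"
    using coords unfolding gauss_samples_def
    by (simp add: PiM_std_normal_component_moment std_normal_moment_simps)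
  show int: "integrable ?G (\<lambda>\<omega>. (feature \<omega> t p * feature \<omega> t q)\<^sup>2)"
  proof (rule Bochner_Integration.integrable_bound[OF f_int])
    show "(\<lambda>\<omega>. (feature \<omega> t p * feature \<omega> t q)\<^sup>2) \<in> borel_measurable ?G"
      unfolding gauss_samples_def by measurable
    show "AE \<omega> in ?G. norm ((feature \<omega> t p * feature \<omega> t q)\<^sup>2) \<le> norm (?f \<omega>)"
      using feature_product_sq_le by (intro AE_I2) (simp add: abs_of_nonneg)
  qed
  show "(\<integral>\<omega>. (feature \<omega> t p * feature \<omega> t q)\<^sup>2 \<partial>?G) \<le> 420"
    using integral_mono[OF int f_int feature_product_sq_le] f_val by simp
qed

definition feature_deviation :: "nat \<Rightarrow> nat \<times> nat \<Rightarrow> nat \<times> nat \<Rightarrow> (nat \<times> nat \<Rightarrow> real) \<Rightarrow> real" where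
  "feature_deviation t p q \<omega> = feature \<omega> t p * feature \<omega> t q - feature_second_moment p q"

lemma measurable_feature_deviation [measurable]:
  "feature_deviation t p q \<in> borel_measurable (PiM K (\<lambda>_. std_normal_distribution))"
  unfolding feature_deviation_def[abs_def] by measurable

lemma feature_deviation_moments:
  assumes t: "t < T" and p: "p \<in> svec_idx d" and q: "q \<in> svec_idx d"
  shows "integrable (gauss_samples T d) (feature_deviation t p q)"
    and "integrable (gauss_samples T d) (\<lambda>\<omega>. (feature_deviation t p q \<omega>)\<^sup>2)"
    and "(\<integral>\<omega>. feature_deviation t p q \<omega> \<partial>gauss_samples T d) = 0"
    and "(\<integral>\<omega>. (feature_deviation t p q \<omega>)\<^sup>2 \<partial>gauss_samples T d) \<le> 420"
proof -
  interpret prob_space "gauss_samples T d" by (rule prob_space_gauss_samples)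
  let ?f = "\<lambda>\<omega>. feature \<omega> t p * feature \<omega> t q" and ?s = "feature_second_moment p q"
  note f = feature_product_moment[OF t p q] and f_sq = feature_product_sq_moment[OF t p q]
  have dev: "feature_deviation t p q = (\<lambda>\<omega>. ?f \<omega> - ?s)"
    by (simp add: fun_eq_iff feature_deviation_def)
  have dev_sq: "(\<lambda>\<omega>. (feature_deviation t p q \<omega>)\<^sup>2) = (\<lambda>\<omega>. (?f \<omega>)\<^sup>2 - 2 * ?s * ?f \<omega> + ?s\<^sup>2)"
    by (simp add: fun_eq_iff feature_deviation_def power2_eq_square algebra_simps)
  show "integrable (gauss_samples T d) (feature_deviation t p q)"
    unfolding dev using f(1) by simp
  show "integrable (gauss_samples T d) (\<lambda>\<omega>. (feature_deviation t p q \<omega>)\<^sup>2)"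
    unfolding dev_sq using f(1) f_sq(1) by simp
  show "(\<integral>\<omega>. feature_deviation t p q \<omega> \<partial>gauss_samples T d) = 0"
    unfolding dev using f by (simp add: prob_space)
  have "(\<integral>\<omega>. (feature_deviation t p q \<omega>)\<^sup>2 \<partial>gauss_samples T d)
      = (\<integral>\<omega>. (?f \<omega>)\<^sup>2 \<partial>gauss_samples T d) - ?s\<^sup>2"
    unfolding dev_sq using f f_sq(1) by (simp add: prob_space power2_eq_square)
  then show "(\<integral>\<omega>. (feature_deviation t p q \<omega>)\<^sup>2 \<partial>gauss_samples T d) \<le> 420"
    using f_sq(2) by (smt (verit) zero_le_power2)
qed

lemma indep_feature_deviations:
  assumes "p \<in> svec_idx d" "q \<in> svec_idx d"
  shows "prob_space.indep_vars (gauss_samples T d) (\<lambda>_. borel) (\<lambda>t. feature_deviation t p q) {..<T}"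
  unfolding gauss_samples_def
proof (rule indep_vars_PiM_disjoint_supports[where K="\<lambda>t. {t} \<times> {..<d}"])
  show "disjoint_family_on (\<lambda>t. {t} \<times> {..<d}) {..<T}"
    by (auto simp: disjoint_family_on_def)
  show "feature_deviation t p q (restrict \<omega> ({t} \<times> {..<d})) = feature_deviation t p q \<omega>" for t \<omega>
    using assms by (simp add: feature_deviation_def feature_restrict)
qed (auto simp: prob_space_std_normal)

lemma feature_deviation_sum_sq_moment:
  assumes B: "B \<subseteq> {..<T}" and p: "p \<in> svec_idx d" and q: "q \<in> svec_idx d"
  shows "integrable (gauss_samples T d) (\<lambda>\<omega>. (\<Sum>t\<in>B. feature_deviation t p q \<omega>)\<^sup>2)"
    and "(\<integral>\<omega>. (\<Sum>t\<in>B. feature_deviation t p q \<omega>)\<^sup>2 \<partial>gauss_samples T d) \<le> 420 * real (card B)"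
proof -
  interpret prob_space "gauss_samples T d" by (rule prob_space_gauss_samples)
  have fin: "finite B" using B finite_subset by blast
  have ind: "indep_vars (\<lambda>_. borel) (\<lambda>t. feature_deviation t p q) B"
    using indep_feature_deviations[OF p q] B by (rule indep_vars_subset)
  have t: "t \<in> B \<Longrightarrow> t < T" for t using B by auto
  note var = expectation_square_sum_indep_centred[OF fin ind]
  note moments = feature_deviation_moments[OF t p q]
  show "integrable (gauss_samples T d) (\<lambda>\<omega>. (\<Sum>t\<in>B. feature_deviation t p q \<omega>)\<^sup>2)"
    using moments by (intro var(1))
  have "(\<integral>\<omega>. (\<Sum>t\<in>B. feature_deviation t p q \<omega>)\<^sup>2 \<partial>gauss_samples T d)
      = (\<Sum>t\<in>B. \<integral>\<omega>. (feature_deviation t p q \<omega>)\<^sup>2 \<partial>gauss_samples T d)"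
    using moments by (intro var(2))
  also have "\<dots> \<le> (\<Sum>t\<in>B. 420)"
    using moments by (intro sum_mono)
  finally show "(\<integral>\<omega>. (\<Sum>t\<in>B. feature_deviation t p q \<omega>)\<^sup>2 \<partial>gauss_samples T d) \<le> 420 * real (card B)"
    by simp
qed

text \<open>The squared Frobenius distance between the empirical second moment matrix over the
  time steps B and card B times its expectation.\<close>
definition gram_deviation :: "nat \<Rightarrow> nat set \<Rightarrow> (nat \<times> nat \<Rightarrow> real) \<Rightarrow> real" where
  "gram_deviation d B \<omega> = (\<Sum>p\<in>svec_idx d. \<Sum>q\<in>svec_idx d. (\<Sum>t\<in>B. feature_deviation t p q \<omega>)\<^sup>2)"

lemma measurable_gram_deviation [measurable]:
  "gram_deviation d B \<in> borel_measurable (PiM K (\<lambda>_. std_normal_distribution))"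
  unfolding gram_deviation_def[abs_def] by measurable

lemma gram_deviation_restrict:
  assumes "\<And>t. t \<in> B \<Longrightarrow> {t} \<times> {..<d} \<subseteq> K"
  shows "gram_deviation d B (restrict \<omega> K) = gram_deviation d B \<omega>"
  unfolding gram_deviation_def feature_deviation_def using assms
  by (intro sum.cong refl) (simp add: feature_restrict)

lemma gram_deviation_moment:
  assumes B: "B \<subseteq> {..<T}"
  shows "integrable (gauss_samples T d) (gram_deviation d B)"
    and "(\<integral>\<omega>. gram_deviation d B \<omega> \<partial>gauss_samples T d) \<le> 420 * real (card B) * real d ^ 4"
proof -
  let ?I = "svec_idx d"
  note moment = feature_deviation_sum_sq_moment[OF B]
  have F: "gram_deviation d B = (\<lambda>\<omega>. \<Sum>p\<in>?I. \<Sum>q\<in>?I. (\<Sum>t\<in>B. feature_deviation t p q \<omega>)\<^sup>2)"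
    by (simp add: fun_eq_iff gram_deviation_def)
  show "integrable (gauss_samples T d) (gram_deviation d B)"
    unfolding F using moment(1) by (intro Bochner_Integration.integrable_sum)
  have "(\<integral>\<omega>. gram_deviation d B \<omega> \<partial>gauss_samples T d)
      = (\<Sum>p\<in>?I. \<Sum>q\<in>?I. \<integral>\<omega>. (\<Sum>t\<in>B. feature_deviation t p q \<omega>)\<^sup>2 \<partial>gauss_samples T d)"
    unfolding F using moment(1)
    by (simp add: Bochner_Integration.integral_sum Bochner_Integration.integrable_sum)
  also have "\<dots> \<le> (\<Sum>p\<in>?I. \<Sum>q\<in>?I. 420 * real (card B))"
    using moment(2) by (intro sum_mono)
  also have "\<dots> = 420 * real (card B) * (real (card ?I))\<^sup>2"
    by (simp add: power2_eq_square)
  also have "\<dots> \<le> 420 * real (card B) * real d ^ 4"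
  proof -
    have "real (card ?I) \<le> (real d)\<^sup>2"
      using card_svec_idx_le[of d] by (simp flip: of_nat_le_iff)
    then have "(real (card ?I))\<^sup>2 \<le> ((real d)\<^sup>2)\<^sup>2" by (intro power_mono) auto
    then show ?thesis by (intro mult_left_mono) auto
  qed
  finally show "(\<integral>\<omega>. gram_deviation d B \<omega> \<partial>gauss_samples T d) \<le> 420 * real (card B) * real d ^ 4" .
qed

definition feature_gram :: "nat set \<Rightarrow> (nat \<times> nat \<Rightarrow> real) \<Rightarrow> nat \<times> nat \<Rightarrow> nat \<times> nat \<Rightarrow> real" where
  "feature_gram B \<omega> p q = (\<Sum>t\<in>B. feature \<omega> t p * feature \<omega> t q)"

lemma symmetric_on_feature_gram: "symmetric_on I (feature_gram B \<omega>)"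
  by (simp add: symmetric_on_def feature_gram_def mult.commute)

lemma quad_form_feature_gram_nonneg: "0 \<le> quad_form I (feature_gram B \<omega>) v"
  unfolding feature_gram_def quad_form_sum_outer by (simp add: sum_nonneg)

text \<open>The mean contributes at least 2 card B |v|^2 and, by Cauchy-Schwarz, the deviation at most
  card B |v|^2 / 2.\<close>
lemma quad_form_feature_gram_ge:
  assumes small: "gram_deviation d B \<omega> \<le> (real (card B))\<^sup>2 / 4"
  shows "3 / 2 * real (card B) * sq_norm (svec_idx d) v
    \<le> quad_form (svec_idx d) (feature_gram B \<omega>) v"
proof -
  let ?I = "svec_idx d" and ?m = "real (card B)" and ?n = "sq_norm (svec_idx d) v"
  let ?E = "\<lambda>p q. \<Sum>t\<in>B. feature_deviation t p q \<omega>"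
  have split: "quad_form ?I (feature_gram B \<omega>) v
      = ?m * quad_form ?I feature_second_moment v + quad_form ?I ?E v"
    unfolding quad_form_def feature_gram_def feature_deviation_def
    by (simp add: sum_subtractf sum_distrib_left sum.distrib algebra_simps)
  have "(quad_form ?I ?E v)\<^sup>2 \<le> ?n\<^sup>2 * gram_deviation d B \<omega>"
    using quad_form_square_le[of ?I ?E v] by (simp add: gram_deviation_def)
  also have "\<dots> \<le> ?n\<^sup>2 * (?m\<^sup>2 / 4)"
    using small by (intro mult_left_mono) auto
  also have "\<dots> = (?n * ?m / 2)\<^sup>2"
    by (simp add: power_mult_distrib power_divide)
  finally have "\<bar>quad_form ?I ?E v\<bar>\<^sup>2 \<le> (?n * ?m / 2)\<^sup>2"
    by simp
  then have "\<bar>quad_form ?I ?E v\<bar> \<le> ?n * ?m / 2"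
    by (rule power2_le_imp_le) (simp add: sq_norm_nonneg)
  moreover have "?m * (2 * ?n) \<le> ?m * quad_form ?I feature_second_moment v"
    using quad_form_feature_second_moment_ge[OF finite_svec_idx] by (intro mult_left_mono) auto
  moreover have "?m * (2 * ?n) = 2 * (?m * ?n)" "?n * ?m / 2 = (?m * ?n) / 2"
    "3 / 2 * ?m * ?n = 3 / 2 * (?m * ?n)"
    by simp_all
  ultimately show ?thesis
    unfolding split by linarith
qed

definition block :: "nat \<Rightarrow> nat \<Rightarrow> nat set" where
  "block m b = {b * m..<b * m + m}"

lemma block_subset:
  assumes "b < k" "k * m \<le> T"
  shows "block m b \<subseteq> {..<T}"
proof -
  have "b * m + m \<le> k * m"
    using assms(1) by (metis Suc_leI add.commute mult_Suc mult_le_mono1)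
  then show ?thesis using assms(2) by (auto simp: block_def)
qed

lemma disjoint_family_on_block: "disjoint_family_on (block m) UNIV"
proof -
  have "block m a \<inter> block m b = {}" if "a < b" for a b
  proof -
    have "a * m + m \<le> b * m"
      using that by (metis Suc_leI add.commute mult_Suc mult_le_mono1)
    then show ?thesis by (auto simp: block_def)
  qed
  then show ?thesis
    unfolding disjoint_family_on_def by (metis Int_commute linorder_neqE_nat)
qed

definition bad_block :: "nat \<Rightarrow> nat \<Rightarrow> nat \<Rightarrow> (nat \<times> nat \<Rightarrow> real) \<Rightarrow> real" where
  "bad_block d m b \<omega> = of_bool ((real m)\<^sup>2 / 4 \<le> gram_deviation d (block m b) \<omega>)"

lemma measurable_bad_block [measurable]:
  "bad_block d m b \<in> borel_measurable (PiM K (\<lambda>_. std_normal_distribution))"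
  unfolding bad_block_def[abs_def] by measurable

lemma bad_block_expectation:
  assumes m: "0 < m" and B: "block m b \<subseteq> {..<T}"
  shows "(\<integral>\<omega>. bad_block d m b \<omega> \<partial>gauss_samples T d) \<le> 1680 * real d ^ 4 / real m"
proof -
  let ?G = "gauss_samples T d" and ?F = "gram_deviation d (block m b)"
  interpret prob_space ?G by (rule prob_space_gauss_samples)
  note F = gram_deviation_moment[OF B]
  have int: "integrable ?G (bad_block d m b)"
  proof (rule Bochner_Integration.integrable_bound[of _ "\<lambda>_. 1::real"])
    show "bad_block d m b \<in> borel_measurable ?G"
      unfolding gauss_samples_def by measurable
  qed (auto simp: bad_block_def)
  have markov: "bad_block d m b \<omega> \<le> ?F \<omega> * (4 / (real m)\<^sup>2)" for \<omega>
  proof -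
    have "0 \<le> ?F \<omega>" by (simp add: gram_deviation_def sum_nonneg)
    then show ?thesis using m by (auto simp: bad_block_def field_simps)
  qed
  have "(\<integral>\<omega>. bad_block d m b \<omega> \<partial>?G) \<le> (\<integral>\<omega>. ?F \<omega> * (4 / (real m)\<^sup>2) \<partial>?G)"
    using int F(1) markov by (intro integral_mono) auto
  also have "\<dots> = (\<integral>\<omega>. ?F \<omega> \<partial>?G) * (4 / (real m)\<^sup>2)"
    by simp
  also have "\<dots> \<le> (420 * real m * real d ^ 4) * (4 / (real m)\<^sup>2)"
    using F(2) by (intro mult_right_mono) (auto simp: block_def)
  also have "\<dots> = 1680 * real d ^ 4 / real m"
    using m by (simp add: power2_eq_square field_simps)
  finally show ?thesis .
qed

lemma indep_bad_blocks:
  assumes "k * m \<le> T"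
  shows "prob_space.indep_vars (gauss_samples T d) (\<lambda>_. borel) (bad_block d m) {..<k}"
  unfolding gauss_samples_def
proof (rule indep_vars_PiM_disjoint_supports[where K="\<lambda>b. block m b \<times> {..<d}"])
  show "block m b \<times> {..<d} \<subseteq> {..<T} \<times> {..<d}" if "b \<in> {..<k}" for b
    using block_subset[OF _ assms, of b] that by auto
  show "disjoint_family_on (\<lambda>b. block m b \<times> {..<d}) {..<k}"
    using disjoint_family_on_block[of m] by (auto simp: disjoint_family_on_def)
  show "bad_block d m b (restrict \<omega> (block m b \<times> {..<d})) = bad_block d m b \<omega>" for b \<omega>
    unfolding bad_block_def by (subst gram_deviation_restrict) auto
qed (auto simp: prob_space_std_normal)

lemma prob_many_bad_blocks_le:
  assumes k: "0 < k" and T: "k * m \<le> T" and m: "0 < m" "13440 * d ^ 4 \<le> m"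
  shows "measure (gauss_samples T d)
      {\<omega> \<in> space (gauss_samples T d). real k / 4 \<le> (\<Sum>b<k. bad_block d m b \<omega>)} \<le> exp (- real k / 32)"
proof -
  interpret prob_space "gauss_samples T d" by (rule prob_space_gauss_samples)
  have "expectation (bad_block d m b) \<le> 1 / 8" if "b < k" for b
  proof -
    have "expectation (bad_block d m b) \<le> 1680 * real d ^ 4 / real m"
      using bad_block_expectation[OF m(1) block_subset[OF that T]] .
    also have "\<dots> \<le> 1 / 8"
    proof -
      have "13440 * real d ^ 4 \<le> real m"
        using m(2) by (metis of_nat_le_iff of_nat_mult of_nat_numeral of_nat_power)
      then show ?thesis using m(1) by (simp add: field_simps)
    qed
    finally show ?thesis .
  qed
  moreover have "bad_block d m b \<omega> \<in> {0..1}" for b \<omega>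
    by (simp add: bad_block_def)
  ultimately show ?thesis
    by (intro prob_sum_ge_quarter_le[OF indep_bad_blocks[OF T] k])
qed

lemma quad_form_feature_gram_ge_few_bad_blocks:
  assumes T: "k * m \<le> T" and few: "(\<Sum>b<k. bad_block d m b \<omega>) < real k / 4"
  shows "9 / 8 * real k * real m * sq_norm (svec_idx d) v
    \<le> quad_form (svec_idx d) (feature_gram {..<T} \<omega>) v"
proof -
  let ?I = "svec_idx d" and ?c = "3 / 2 * real m * sq_norm (svec_idx d) v"
  have per_block: "(1 - bad_block d m b \<omega>) * ?c \<le> quad_form ?I (feature_gram (block m b) \<omega>) v" for b
  proof (cases "(real m)\<^sup>2 / 4 \<le> gram_deviation d (block m b) \<omega>")
    case True
    then show ?thesis by (simp add: bad_block_def quad_form_feature_gram_nonneg)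
  next
    case False
    then show ?thesis
      using quad_form_feature_gram_ge[of d "block m b" \<omega> v] by (simp add: bad_block_def block_def)
  qed
  have "(real k - (\<Sum>b<k. bad_block d m b \<omega>)) * ?c = (\<Sum>b<k. (1 - bad_block d m b \<omega>) * ?c)"
    by (simp only: sum_distrib_right[symmetric] sum_subtractf) simp
  also have "\<dots> \<le> (\<Sum>b<k. quad_form ?I (feature_gram (block m b) \<omega>) v)"
    by (intro sum_mono per_block)
  also have "\<dots> = quad_form ?I (feature_gram {..<k * m} \<omega>) v"
    unfolding feature_gram_def quad_form_sum_outer block_def by (rule sum.nat_group)
  also have "\<dots> \<le> quad_form ?I (feature_gram {..<T} \<omega>) v"
    unfolding feature_gram_def quad_form_sum_outer using T by (intro sum_mono2) auto
  finally have "(real k - (\<Sum>b<k. bad_block d m b \<omega>)) * ?c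
      \<le> quad_form ?I (feature_gram {..<T} \<omega>) v" .
  moreover have "3 / 4 * real k * ?c \<le> (real k - (\<Sum>b<k. bad_block d m b \<omega>)) * ?c"
    using few sq_norm_nonneg[of ?I v] by (intro mult_right_mono) auto
  ultimately show ?thesis
    by (simp add: algebra_simps)
qed

lemma lambda_min_feature_gram_ge_few_bad_blocks:
  assumes "1 \<le> d" "k * m \<le> T" "(\<Sum>b<k. bad_block d m b \<omega>) < real k / 4"
  shows "9 / 8 * real k * real m \<le> lambda_min (svec_idx d) (feature_gram {..<T} \<omega>)"
  using quad_form_feature_gram_ge_few_bad_blocks[OF assms(2,3)]
  by (subst lambda_min_ge_iff[OF finite_svec_idx svec_idx_not_empty[OF assms(1)]
        symmetric_on_feature_gram]) blast

lemma measurable_lambda_min_feature_gram: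
  assumes "1 \<le> d"
  shows "(\<lambda>\<omega>. lambda_min (svec_idx d) (feature_gram B \<omega>)) \<in> borel_measurable (gauss_samples T d)"
proof (rule borel_measurable_lambda_min[OF finite_svec_idx svec_idx_not_empty[OF assms]
      symmetric_on_feature_gram])
  show "(\<lambda>\<omega>. feature_gram B \<omega> p q) \<in> borel_measurable (gauss_samples T d)" for p q
    unfolding feature_gram_def gauss_samples_def by measurable
qed

lemma ln_430080_bound:
  assumes "1 \<le> d" "0 < \<delta>"
  shows "9 + ln (1 / \<delta>) \<le> ln (430080 * real d ^ 2 / \<delta>)"
proof -
  have "exp (9::real) = exp 1 ^ 9"
    by (simp add: exp_of_nat_mult[symmetric])
  also have "\<dots> \<le> 3 ^ 9"
    by (intro power_mono exp_le) auto
  finally have "9 \<le> ln (430080 :: real)"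
    by (simp add: ln_ge_iff)
  moreover have "ln (430080 * real d ^ 2 / \<delta>) = ln 430080 + ln (real d ^ 2) + ln (1 / \<delta>)"
    using assms by (simp add: ln_mult ln_div)
  moreover have "0 \<le> ln (real d ^ 2)"
    using assms by simp
  ultimately show ?thesis
    by linarith
qed

text \<open>The block length m = 13440 d^4 = 8 * 1680 d^4 bounds the probability of a bad block by
  1/8, and c = 32 * 13440 makes the number k of complete blocks large enough for
  exp (-k/32) \<le> \<delta>, while the incomplete block at the end is shorter than k m / 8.\<close>
lemma number_of_blocks_bounds:
  fixes d T :: nat and \<delta> :: real
  assumes d: "1 \<le> d" and \<delta>: "0 < \<delta>" "\<delta> < 1"
    and T: "430080 * real d ^ 4 * ln (430080 * real d ^ 2 / \<delta>) \<le> real T"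
  defines "m \<equiv> 13440 * d ^ 4"
  defines "k \<equiv> T div m"
  shows "0 < k" "exp (- real k / 32) \<le> \<delta>" "real T < 9 / 8 * real k * real m"
proof -
  have m: "0 < m" "real m = 13440 * real d ^ 4"
    using d by (simp_all add: m_def)
  have ln_ge: "9 + ln (1 / \<delta>) \<le> ln (430080 * real d ^ 2 / \<delta>)"
    using ln_430080_bound[OF d \<delta>(1)] .
  have "0 \<le> ln (1 / \<delta>)"
    using \<delta> by simp
  have "32 * real m * (9 + ln (1 / \<delta>)) \<le> real T"
    using mult_left_mono[OF ln_ge, of "32 * real m"] T m by (simp add: mult_ac)
  moreover have "real T < (real k + 1) * real m"
  proof -
    have "T < (k + 1) * m"
      using m(1) by (simp add: k_def dividend_less_div_times)
    then show ?thesis by (metis of_nat_1 of_nat_add of_nat_less_iff of_nat_mult)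
  qed
  ultimately have "32 * (9 + ln (1 / \<delta>)) * real m < (real k + 1) * real m"
    by (simp add: mult_ac)
  then have "32 * (9 + ln (1 / \<delta>)) < real k + 1"
    by (rule mult_right_less_imp_less) simp
  then have k_ge: "288 + 32 * ln (1 / \<delta>) < real k + 1"
    by simp
  then have k8: "8 \<le> real k"
    using \<open>0 \<le> ln (1 / \<delta>)\<close> by linarith
  then show "0 < k"
    by (cases k) auto
  have "ln (1 / \<delta>) \<le> real k / 32"
    using k_ge by linarith
  then have "exp (- real k / 32) \<le> exp (- ln (1 / \<delta>))"
    by simp
  then show "exp (- real k / 32) \<le> \<delta>"
    using \<delta> by (simp add: ln_div)
  have "(real k + 1) * real m \<le> 9 / 8 * real k * real m"
    using k8 m(1) by (intro mult_right_mono) auto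
  then show "real T < 9 / 8 * real k * real m"
    using \<open>real T < (real k + 1) * real m\<close> by linarith
qed

lemma prob_lambda_min_feature_gram_gt:
  assumes d: "1 \<le> d" and k: "0 < k" and km: "k * m \<le> T" "real T < 9 / 8 * real k * real m"
    and m: "0 < m" "13440 * d ^ 4 \<le> m"
  shows "1 - exp (- real k / 32) \<le> measure (gauss_samples T d)
    {\<omega> \<in> space (gauss_samples T d). real T < lambda_min (svec_idx d) (feature_gram {..<T} \<omega>)}"
    (is "_ \<le> measure _ ?E")
proof -
  interpret prob_space "gauss_samples T d" by (rule prob_space_gauss_samples)
  let ?Bad = "{\<omega> \<in> space (gauss_samples T d). real k / 4 \<le> (\<Sum>b<k. bad_block d m b \<omega>)}"
  have good: "space (gauss_samples T d) - ?Bad \<subseteq> ?E"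
  proof
    fix \<omega> assume \<omega>: "\<omega> \<in> space (gauss_samples T d) - ?Bad"
    then have "9 / 8 * real k * real m \<le> lambda_min (svec_idx d) (feature_gram {..<T} \<omega>)"
      by (intro lambda_min_feature_gram_ge_few_bad_blocks[OF d km(1)]) auto
    then show "\<omega> \<in> ?E"
      using km(2) \<omega> by auto
  qed
  have "(\<lambda>\<omega>. \<Sum>b<k. bad_block d m b \<omega>) \<in> borel_measurable (gauss_samples T d)"
    unfolding gauss_samples_def by (intro borel_measurable_sum measurable_bad_block)
  then have "?Bad \<in> events"
    unfolding borel_measurable_iff_ge by blast
  moreover have "?E \<in> events"
    using measurable_lambda_min_feature_gram[OF d] unfolding borel_measurable_iff_greater by blast
  ultimately have "1 - prob ?Bad \<le> prob ?E"
    using finite_measure_mono[OF good] prob_compl by simp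
  moreover have "prob ?Bad \<le> exp (- real k / 32)"
    by (rule prob_many_bad_blocks_le[OF k km(1) m])
  ultimately show ?thesis
    by linarith
qed

theorem proposition1:
  shows "\<exists>c>0. \<forall>(d::nat) (\<delta>::real) (T::nat). d \<ge> 1 \<longrightarrow> 0 < \<delta> \<longrightarrow> \<delta> < 1 \<longrightarrow>
     real T \<ge> c * real d ^ 4 * ln (c * real d ^ 2 / \<delta>) \<longrightarrow>
     measure (gauss_samples T d)
       {\<omega> \<in> space (gauss_samples T d).
          lambda_min (svec_idx d)
            (\<lambda>p q. \<Sum>t<T. feature \<omega> t p * feature \<omega> t q) > real T}
     \<ge> 1 - \<delta>"
proof (intro exI[of _ 430080] conjI allI impI)
  fix d T :: nat and \<delta> :: real
  assume d: "d \<ge> 1" and \<delta>: "0 < \<delta>" "\<delta> < 1"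
    and T: "real T \<ge> 430080 * real d ^ 4 * ln (430080 * real d ^ 2 / \<delta>)"
  define m where "m = 13440 * d ^ 4"
  define k where "k = T div m"
  note k = number_of_blocks_bounds[OF d \<delta> T, folded m_def k_def]
  have m: "0 < m" "13440 * d ^ 4 \<le> m" and km: "k * m \<le> T"
    using d by (simp_all add: m_def k_def)
  have "1 - exp (- real k / 32) \<le> measure (gauss_samples T d)
      {\<omega> \<in> space (gauss_samples T d). real T < lambda_min (svec_idx d) (feature_gram {..<T} \<omega>)}"
    by (rule prob_lambda_min_feature_gram_gt[OF d k(1) km k(3) m])
  then show "1 - \<delta> \<le> measure (gauss_samples T d) {\<omega> \<in> space (gauss_samples T d).
      lambda_min (svec_idx d) (\<lambda>p q. \<Sum>t<T. feature \<omega> t p * feature \<omega> t q) > real T}"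
    using k(2) by (simp add: feature_gram_def[abs_def])
qed simp

end
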